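(* Let $\mathcal{A}\in\mathbb{R}^{d_1\times\cdots\times d_k}$ be an arbitrary order-$k$ real tensor and let $\pi_1,\pi_2\in\mathcal{P}_{[k]}$ be any two partitions (not necessarily comparable). Then \[ \left[\frac{\dim(\mathcal{A})}{\dim_{\mathcal{A}}(\pi_1,\pi_2)}\right]^{-1/2}\|\mathrm{Unfold}_{\pi_1}(\mathcal{A})\|_\sigma\le \|\mathrm{Unfold}_{\pi_2}(\mathcal{A})\|_\sigma\le \left[\frac{\dim(\mathcal{A})}{\dim_{\mathcal{A}}(\pi_2,\pi_1)}\right]^{1/2}\|\mathrm{Unfold}_{\pi_1}(\mathcal{A})\|_\sigma . \]
   Context: $\dim(\mathcal{A})=\prod_{n=1}^k d_n$. For a real tensor $\mathcal{T}\in\mathbb{R}^{e_1\times\cdots\times e_m}$, $\|\mathcal{T}\|_\sigma=\sup\{\sum t_{i_1\dots i_m}x^{(1)}_{i_1}\cdots x^{(m)}_{i_m}:\ \mathbf{x}_n\in\mathbb{R}^{e_n},\ \|\mathbf{x}_n\|_2=1\}$ (spectral norm). $\mathcal{P}_{[k]}$ is the set of partitions of $[k]=\{1,\dots,k\}$. Unfolding: for $\pi=\{B_1,\dots,B_\ell\}\in\mathcal{P}_{[k]}$, $\mathrm{Unfold}_\pi(\mathcal{A})$ is the order-$\ell$ tensor of dimensions $(\prod_{j\in B_1}d_j,\dots,\prod_{j\in B_\ell}d_j)$ whose entry at $(m_1,\dots,m_\ell)$ is $a_{i_1\dots i_k}$, where $m_j$ corresponds to $(i_r)_{r\in B_j}$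 under a fixed bijection $\prod_{r\in B_j}[d_r]\to[\prod_{r\in B_j}d_r]$. For $\pi_1,\pi_2\in\mathcal{P}_{[k]}$ define $\dim_{\mathcal{A}}(\pi_1,\pi_2)=\prod_{B\in\pi_1}\max_{B'\in\pi_2}D_{\mathcal{A}}(B,B')$, where $D_{\mathcal{A}}(B,B')=\prod_{n\in B\cap B'}d_n$ if $B\cap B'\neq\emptyset$ and $D_{\mathcal{A}}(B,B')=0$ if $B\cap B'=\emptyset$. *)

theory Defs
  imports "HOL-Analysis.Analysis" "HOL-Library.Disjoint_Sets"
begin

text \<open>A real tensor of order m with dimensions e (positions 1..m) is
  a function T :: (nat \<Rightarrow> nat) \<Rightarrow> real; its entries are the values on the
  index tuples in tidx m e, where the index in position j ranges over {0..<e j}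
  (0-based instead of the paper's 1-based; irrelevant).\<close>

definition tidx :: "nat set \<Rightarrow> (nat \<Rightarrow> nat) \<Rightarrow> (nat \<Rightarrow> nat) set" where
  "tidx I e = PiE I (\<lambda>j. {..<e j})"

definition spec_norm :: "nat \<Rightarrow> (nat \<Rightarrow> nat) \<Rightarrow> ((nat \<Rightarrow> nat) \<Rightarrow> real) \<Rightarrow> real" where
  "spec_norm m e T = Sup {(\<Sum>i\<in>tidx {1..m} e. T i * (\<Prod>n\<in>{1..m}. x n (i n))) | x.
       \<forall>n\<in>{1..m}. sqrt (\<Sum>j<e n. (x n j)^2) = 1}"

definition blocks :: "nat set set \<Rightarrow> nat set list" where
  "blocks P = (SOME bs. set bs = P \<and> distinct bs)"

definition enc :: "(nat \<Rightarrow> nat) \<Rightarrow> nat set \<Rightarrow> (nat \<Rightarrow> nat) \<Rightarrow> nat" where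
  "enc d B = (SOME f. bij_betw f (tidx B d) {..<(\<Prod>r\<in>B. d r)})"

definition unfold_dims :: "(nat \<Rightarrow> nat) \<Rightarrow> nat set set \<Rightarrow> nat \<Rightarrow> nat" where
  "unfold_dims d P j = (\<Prod>r\<in>blocks P ! (j - 1). d r)"

definition unfold :: "nat \<Rightarrow> (nat \<Rightarrow> nat) \<Rightarrow> nat set set \<Rightarrow> ((nat \<Rightarrow> nat) \<Rightarrow> real)
     \<Rightarrow> (nat \<Rightarrow> nat) \<Rightarrow> real" where
  "unfold k d P A mm = A (THE i. i \<in> tidx {1..k} d \<and>
      (\<forall>j\<in>{1..length (blocks P)}. enc d (blocks P ! (j - 1)) (restrict i (blocks P ! (j - 1))) = mm j))"

definition unfold_norm :: "nat \<Rightarrow> (nat \<Rightarrow> nat) \<Rightarrow> nat set set \<Rightarrow> ((nat \<Rightarrow> nat) \<Rightarrow> real) \<Rightarrow> real" where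
  "unfold_norm k d P A = spec_norm (length (blocks P)) (unfold_dims d P) (unfold k d P A)"

definition DA :: "(nat \<Rightarrow> nat) \<Rightarrow> nat set \<Rightarrow> nat set \<Rightarrow> nat" where
  "DA d B B' = (if B \<inter> B' \<noteq> {} then (\<Prod>n\<in>B \<inter> B'. d n) else 0)"

definition dimA :: "(nat \<Rightarrow> nat) \<Rightarrow> nat set set \<Rightarrow> nat set set \<Rightarrow> nat" where
  "dimA d P1 P2 = (\<Prod>B\<in>P1. Max ((\<lambda>B'. DA d B B') ` P2))"

end

theory Submission
  imports Defs
begin

text \<open>Both unfoldings are suprema of one multilinear form
  \<open>\<Sum>i. A i * (\<Prod>B\<in>P. y B (restrict i B))\<close> over families of unit vectors indexed by the blocks
  of the partition \<open>P\<close>. It suffices to bound the form of \<open>P2\<close> by the norm of \<open>P1\<close>; the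
  lower bound is the same inequality with the partitions exchanged. Choose for each block \<open>B\<close>
  of \<open>P2\<close> a block \<open>F B\<close> of \<open>P1\<close> of largest overlap with \<open>B\<close>. Freezing the coordinates in
  \<open>B - F B\<close> at a value \<open>t\<close> writes \<open>y B\<close> as a sum over \<open>t\<close> of products of a slice of \<open>y B\<close>
  on \<open>B \<inter> F B\<close> with point masses on the other intersections \<open>B \<inter> B'\<close>. Each term is then a
  product test family for \<open>P1\<close>, bounded by the norm of \<open>P1\<close> times the norms of the slices, and
  Cauchy-Schwarz over the \<open>\<Prod>B\<in>P2. \<Prod>n\<in>B - F B. d n\<close> frozen values produces the factor
  \<open>sqrt (dim A / dimA d P2 P1)\<close>.\<close>

lemma real_sqrt_prod: "sqrt (\<Prod>x\<in>A. f x) = (\<Prod>x\<in>A. sqrt (f x))"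
  by (induction A rule: infinite_finite_induct) (auto simp: real_sqrt_mult)

lemma sum_sqrt_le_sqrt_card:
  fixes f :: "'a \<Rightarrow> real"
  assumes "\<forall>x\<in>S. f x \<ge> 0"
  shows "(\<Sum>x\<in>S. sqrt (f x)) \<le> sqrt (card S * (\<Sum>x\<in>S. f x))"
proof (rule real_le_rsqrt)
  have "(\<Sum>x\<in>S. sqrt (f x))\<^sup>2 \<le> (\<Sum>x\<in>S. (sqrt (f x))\<^sup>2) * card S"
    by (rule sum_squared_le_sum_of_squares)
  also have "(\<Sum>x\<in>S. (sqrt (f x))\<^sup>2) = (\<Sum>x\<in>S. f x)"
    using assms by (intro sum.cong) auto
  finally show "(\<Sum>x\<in>S. sqrt (f x))\<^sup>2 \<le> card S * (\<Sum>x\<in>S. f x)"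
    by (simp add: mult.commute)
qed

lemma powr_neg_half_mult_le:
  assumes "q > 0" "a \<le> sqrt q * b"
  shows "q powr (-1/2) * a \<le> b"
proof -
  have "q powr (-1/2) = inverse (sqrt q)"
    using powr_minus[of q "1/2"] assms(1) by (simp add: powr_half_sqrt)
  moreover have "inverse (sqrt q) * a \<le> inverse (sqrt q) * (sqrt q * b)"
    by (rule mult_left_mono[OF assms(2)]) (use assms(1) in simp)
  moreover have "inverse (sqrt q) * (sqrt q * b) = b"
    using assms(1) by simp
  ultimately show ?thesis
    by simp
qed

lemma finite_tidx: "finite B \<Longrightarrow> finite (tidx B d)"
  unfolding tidx_def by (simp add: finite_PiE)

lemma card_tidx: "finite B \<Longrightarrow> card (tidx B d) = (\<Prod>n\<in>B. d n)"
  unfolding tidx_def by (simp add: card_PiE)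

lemma restrict_in_tidx: "i \<in> tidx I d \<Longrightarrow> B \<subseteq> I \<Longrightarrow> restrict i B \<in> tidx B d"
  unfolding tidx_def by (auto simp: PiE_iff)

lemma restrict_tidx_self: "u \<in> tidx B d \<Longrightarrow> restrict u B = u"
  unfolding tidx_def by (rule PiE_restrict)

lemma sum_tidx_Un:
  assumes "B1 \<inter> B2 = {}"
  shows "(\<Sum>u\<in>tidx (B1 \<union> B2) d. F u)
       = (\<Sum>u1\<in>tidx B1 d. \<Sum>u2\<in>tidx B2 d. F (merge B1 B2 (u1, u2)))"
proof -
  have "(\<Sum>u\<in>tidx (B1 \<union> B2) d. F u) = (\<Sum>(u1, u2)\<in>tidx B1 d \<times> tidx B2 d. F (merge B1 B2 (u1, u2)))"
    by (rule sum.reindex_bij_witness[where i="merge B1 B2" and j="\<lambda>u. (restrict u B1, restrict u B2)"])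
       (use assms in \<open>auto simp: tidx_def\<close>)
  then show ?thesis
    by (simp add: sum.cartesian_product)
qed

lemma sum_tidx_UN_prod_restrict:
  fixes f :: "'j \<Rightarrow> (nat \<Rightarrow> nat) \<Rightarrow> 'a :: comm_semiring_1"
  assumes "finite J" and "disjoint_family_on b J"
  shows "(\<Sum>u\<in>tidx (\<Union>(b ` J)) d. \<Prod>j\<in>J. f j (restrict u (b j)))
       = (\<Prod>j\<in>J. \<Sum>v\<in>tidx (b j) d. f j v)"
  using assms
proof (induction J rule: finite_induct)
  case empty
  then show ?case by (simp add: tidx_def)
next
  case (insert j J)
  let ?U = "\<Union>(b ` J)"
  have disj: "b j \<inter> ?U = {}" and IH_disj: "disjoint_family_on b J"
    using insert by (auto simp: disjoint_family_on_def)
  have restrict_other: "restrict (merge (b j) ?U (u1, u2)) (b j') = restrict u2 (b j')"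
    if "j' \<in> J" for u1 u2 j'
    using disj that by (auto simp: merge_def restrict_def fun_eq_iff)
  have "(\<Sum>u\<in>tidx (\<Union>(b ` insert j J)) d. \<Prod>j\<in>insert j J. f j (restrict u (b j)))
      = (\<Sum>u\<in>tidx (b j \<union> ?U) d. f j (restrict u (b j)) * (\<Prod>j'\<in>J. f j' (restrict u (b j'))))"
    using insert.hyps by simp
  also have "\<dots> = (\<Sum>u1\<in>tidx (b j) d. \<Sum>u2\<in>tidx ?U d. f j u1 * (\<Prod>j'\<in>J. f j' (restrict u2 (b j'))))"
    unfolding sum_tidx_Un[OF disj]
    by (intro sum.cong refl arg_cong2[where f = "(*)"] prod.cong)
       (simp_all add: disj restrict_tidx_self restrict_other)
  also have "\<dots> = (\<Sum>u1\<in>tidx (b j) d. f j u1) * (\<Sum>u2\<in>tidx ?U d. \<Prod>j'\<in>J. f j' (restrict u2 (b j')))"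
    by (simp add: sum_product)
  also have "\<dots> = (\<Prod>j\<in>insert j J. \<Sum>v\<in>tidx (b j) d. f j v)"
    unfolding insert.IH[OF IH_disj] using insert.hyps by simp
  finally show ?case .
qed

lemma finite_blocks: "finite I \<Longrightarrow> \<forall>B\<in>P. B \<subseteq> I \<Longrightarrow> finite P"
  by (meson Pow_iff finite_Pow_iff rev_finite_subset subsetI)

lemma finite_partition: "finite I \<Longrightarrow> partition_on I P \<Longrightarrow> finite P"
  using partition_onD1 finite_UnionD by blast

lemma partition_block_subset: "partition_on I P \<Longrightarrow> B \<in> P \<Longrightarrow> B \<subseteq> I"
  using partition_onD1 by blast

lemma prod_partition:
  assumes "finite I" "partition_on I P"
  shows "(\<Prod>n\<in>I. f n) = (\<Prod>B\<in>P. \<Prod>n\<in>B. f n)"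
proof -
  have "\<forall>B\<in>P. finite B"
    using assms(1) partition_block_subset[OF assms(2)] finite_subset by blast
  moreover have "\<forall>A\<in>P. \<forall>B\<in>P. A \<noteq> B \<longrightarrow> A \<inter> B = {}"
    using partition_onD2[OF assms(2)] unfolding disjoint_def .
  ultimately have "(\<Prod>n\<in>\<Union>P. f n) = (\<Prod>B\<in>P. \<Prod>n\<in>B. f n)"
    by (simp add: prod.Union_disjoint)
  then show ?thesis
    unfolding partition_onD1[OF assms(2), symmetric] .
qed

lemma tidx_eq_by_blocks:
  assumes "partition_on I P" "i \<in> tidx I d" "i' \<in> tidx I d"
    and "\<And>B. B \<in> P \<Longrightarrow> restrict i B = restrict i' B"
  shows "i = i'"
proof (rule PiE_ext)
  show "i \<in> PiE I (\<lambda>j. {..<d j})" "i' \<in> PiE I (\<lambda>j. {..<d j})"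
    using assms(2,3) unfolding tidx_def by auto
  fix n assume "n \<in> I"
  then obtain B where "B \<in> P" "n \<in> B"
    using partition_onD1[OF assms(1)] by blast
  then show "i n = i' n"
    using fun_cong[OF assms(4), of B n] by simp
qed

lemma disjoint_family_on_Int_partition:
  "partition_on I P \<Longrightarrow> disjoint_family_on (\<lambda>B. B \<inter> C) P"
  unfolding disjoint_family_on_def using partition_onD2 disjointD by blast

lemma Int_other_block_subset:
  "partition_on I P \<Longrightarrow> B0 \<in> P \<Longrightarrow> B' \<in> P \<Longrightarrow> B' \<noteq> B0 \<Longrightarrow> B \<inter> B' \<subseteq> B - B0"
  using partition_onD2 disjointD by blast

section \<open>Block multilinear forms\<close>

definition sqnorm :: "(nat \<Rightarrow> nat) \<Rightarrow> nat set \<Rightarrow> ((nat \<Rightarrow> nat) \<Rightarrow> real) \<Rightarrow> real" where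
  "sqnorm d B f = (\<Sum>v\<in>tidx B d. (f v)\<^sup>2)"

definition block_form :: "nat set \<Rightarrow> (nat \<Rightarrow> nat) \<Rightarrow> nat set set \<Rightarrow> ((nat \<Rightarrow> nat) \<Rightarrow> real)
    \<Rightarrow> (nat set \<Rightarrow> (nat \<Rightarrow> nat) \<Rightarrow> real) \<Rightarrow> real" where
  "block_form I d P A y = (\<Sum>i\<in>tidx I d. A i * (\<Prod>B\<in>P. y B (restrict i B)))"

text \<open>The spectral norm of the unfolding along \<open>P\<close>, with the index tuples of each block
  used directly instead of being encoded as single indices.\<close>
definition block_norm :: "nat set \<Rightarrow> (nat \<Rightarrow> nat) \<Rightarrow> nat set set \<Rightarrow> ((nat \<Rightarrow> nat) \<Rightarrow> real) \<Rightarrow> real" where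
  "block_norm I d P A = Sup {block_form I d P A y | y. \<forall>B\<in>P. sqnorm d B (y B) = 1}"

lemma sqnorm_nonneg: "sqnorm d B f \<ge> 0"
  unfolding sqnorm_def by (simp add: sum_nonneg)

lemma sq_le_sqnorm: "finite B \<Longrightarrow> v \<in> tidx B d \<Longrightarrow> (f v)\<^sup>2 \<le> sqnorm d B f"
  unfolding sqnorm_def by (rule member_le_sum) (auto simp: finite_tidx)

lemma sqnorm_scale: "sqnorm d B (\<lambda>v. c * f v) = c\<^sup>2 * sqnorm d B f"
  unfolding sqnorm_def by (simp add: power_mult_distrib sum_distrib_left)

lemma sqnorm_unit_vector:
  assumes "finite B" "u \<in> tidx B d"
  shows "sqnorm d B (\<lambda>v. of_bool (v = u)) = 1"
proof -
  have "sqnorm d B (\<lambda>v. of_bool (v = u)) = (\<Sum>v\<in>tidx B d. if v = u then 1 else 0)"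
    unfolding sqnorm_def by (intro sum.cong) auto
  then show ?thesis
    using assms by (simp add: finite_tidx)
qed

lemma sqnorm_prod_restrict:
  assumes "finite J" "disjoint_family_on b J"
  shows "sqnorm d (\<Union>(b ` J)) (\<lambda>u. \<Prod>j\<in>J. f j (restrict u (b j))) = (\<Prod>j\<in>J. sqnorm d (b j) (f j))"
  unfolding sqnorm_def prod_power_distrib by (rule sum_tidx_UN_prod_restrict[OF assms])

lemma block_form_cong:
  "(\<And>B v. B \<in> P \<Longrightarrow> y B v = y' B v) \<Longrightarrow> block_form I d P A y = block_form I d P A y'"
  unfolding block_form_def by (intro sum.cong refl arg_cong2[where f = "(*)"] prod.cong) auto

lemma block_form_scale:
  "block_form I d P A (\<lambda>B v. c B * y B v) = (\<Prod>B\<in>P. c B) * block_form I d P A y"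
  unfolding block_form_def by (simp add: sum_distrib_left prod.distrib mult_ac)

lemma bdd_above_block_form:
  assumes "finite I" "\<forall>B\<in>P. B \<subseteq> I"
  shows "bdd_above {block_form I d P A y | y. \<forall>B\<in>P. sqnorm d B (y B) = 1}"
proof (rule bdd_aboveI)
  fix z assume "z \<in> {block_form I d P A y | y. \<forall>B\<in>P. sqnorm d B (y B) = 1}"
  then obtain y where y: "\<forall>B\<in>P. sqnorm d B (y B) = 1" and z: "z = block_form I d P A y"
    by blast
  have "\<bar>\<Prod>B\<in>P. y B (restrict i B)\<bar> \<le> 1" if i: "i \<in> tidx I d" for i
  proof -
    have "(y B (restrict i B))\<^sup>2 \<le> 1" if "B \<in> P" for B
      using sq_le_sqnorm[OF _ restrict_in_tidx[OF i]] y that assms by (metis finite_subset)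
    then show ?thesis
      unfolding abs_prod by (intro prod_le_1) (auto simp: abs_square_le_1)
  qed
  then have "\<bar>A i * (\<Prod>B\<in>P. y B (restrict i B))\<bar> \<le> \<bar>A i\<bar>" if "i \<in> tidx I d" for i
    using that by (simp add: abs_mult mult_left_le)
  then show "z \<le> (\<Sum>i\<in>tidx I d. \<bar>A i\<bar>)"
    unfolding z block_form_def by (meson abs_le_D1 order_trans sum_abs sum_mono)
qed

lemma block_form_le_block_norm:
  assumes "finite I" "\<forall>B\<in>P. B \<subseteq> I" "\<forall>B\<in>P. sqnorm d B (y B) = 1"
  shows "block_form I d P A y \<le> block_norm I d P A"
  unfolding block_norm_def by (rule cSup_upper) (use assms bdd_above_block_form in auto)

lemma block_form_eq_0_if_sqnorm_eq_0:
  assumes "finite I" "\<forall>B\<in>P. B \<subseteq> I" "B0 \<in> P" "sqnorm d B0 (x B0) = 0"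
  shows "block_form I d P A x = 0"
proof -
  have "(\<Prod>B\<in>P. x B (restrict i B)) = 0" if "i \<in> tidx I d" for i
  proof (rule prod_zero)
    show "finite P" using finite_blocks[OF assms(1,2)] .
    have "x B0 (restrict i B0) = 0"
      using sq_le_sqnorm[OF _ restrict_in_tidx[OF that], of B0 "x B0"] assms
      by (simp add: finite_subset)
    then show "\<exists>B\<in>P. x B (restrict i B) = 0" using assms(3) by blast
  qed
  then show ?thesis
    unfolding block_form_def by simp
qed

lemma block_form_le_block_norm_scaled:
  assumes "finite I" "\<forall>B\<in>P. B \<subseteq> I"
  shows "block_form I d P A x \<le> block_norm I d P A * sqrt (\<Prod>B\<in>P. sqnorm d B (x B))"
proof (cases "\<exists>B\<in>P. sqnorm d B (x B) = 0")
  case True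
  then obtain B0 where B0: "B0 \<in> P" "sqnorm d B0 (x B0) = 0" by auto
  then have "(\<Prod>B\<in>P. sqnorm d B (x B)) = 0"
    using finite_blocks[OF assms] by (auto simp: prod_zero_iff)
  then show ?thesis
    using block_form_eq_0_if_sqnorm_eq_0[OF assms B0(1), where x = x] B0(2) by simp
next
  case False
  define s where "s B = sqrt (sqnorm d B (x B))" for B
  have s_pos: "s B > 0" if "B \<in> P" for B
    using False that sqnorm_nonneg[of d B "x B"] unfolding s_def by force
  define y where "y B v = x B v / s B" for B v
  have "sqnorm d B (y B) = 1" if "B \<in> P" for B
  proof -
    have "sqnorm d B (y B) = (1 / s B)\<^sup>2 * sqnorm d B (x B)"
      using sqnorm_scale[of d B "1 / s B" "x B"] unfolding y_def by simp
    also have "\<dots> = 1"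
      using s_pos[OF that] sqnorm_nonneg[of d B "x B"] by (simp add: s_def power_divide)
    finally show ?thesis .
  qed
  then have "block_form I d P A y \<le> block_norm I d P A"
    using block_form_le_block_norm[OF assms] by blast
  moreover have "block_form I d P A x = (\<Prod>B\<in>P. s B) * block_form I d P A y"
    unfolding block_form_scale[symmetric]
    by (intro block_form_cong) (auto simp: y_def dest: s_pos)
  moreover have "(\<Prod>B\<in>P. s B) \<ge> 0"
    using s_pos by (simp add: prod_nonneg less_imp_le)
  ultimately have "block_form I d P A x \<le> (\<Prod>B\<in>P. s B) * block_norm I d P A"
    using mult_left_mono by metis
  then show ?thesis
    by (simp add: s_def real_sqrt_prod mult.commute)
qed

lemma exists_unit_block_family:
  assumes "finite I" "\<forall>B\<in>P. B \<subseteq> I" "\<forall>n\<in>I. d n > 0"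
  shows "\<exists>y. \<forall>B\<in>P. sqnorm d B (y B) = 1"
proof -
  define y :: "nat set \<Rightarrow> (nat \<Rightarrow> nat) \<Rightarrow> real" where "y B v = of_bool (v = restrict (\<lambda>_. 0) B)" for B v
  have "sqnorm d B (y B) = 1" if "B \<in> P" for B
    unfolding y_def
  proof (rule sqnorm_unit_vector)
    show "finite B" using assms(1,2) that finite_subset by blast
    have "\<forall>n\<in>B. d n > 0" using assms(2,3) that by blast
    then show "restrict (\<lambda>_. 0) B \<in> tidx B d" unfolding tidx_def by auto
  qed
  then show ?thesis by blast
qed

lemma block_norm_nonneg:
  assumes "finite I" "\<forall>B\<in>P. B \<subseteq> I" "\<forall>n\<in>I. d n > 0" "P \<noteq> {}"
  shows "block_norm I d P A \<ge> 0"
proof -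
  obtain y where y: "\<forall>B\<in>P. sqnorm d B (y B) = 1"
    using exists_unit_block_family[OF assms(1-3)] by blast
  obtain B0 where B0: "B0 \<in> P" using assms(4) by blast
  define c :: "nat set \<Rightarrow> real" where "c B = (if B = B0 then -1 else 1)" for B
  have rest: "(\<Prod>B\<in>P - {B0}. c B) = 1"
    by (rule prod.neutral) (simp add: c_def)
  have "(\<Prod>B\<in>P. c B) = c B0 * (\<Prod>B\<in>P - {B0}. c B)"
    using prod.remove[OF finite_blocks[OF assms(1,2)] B0] .
  also have "\<dots> = -1"
    unfolding rest by (simp add: c_def)
  finally have flip: "block_form I d P A (\<lambda>B v. c B * y B v) = - block_form I d P A y"
    by (simp add: block_form_scale)
  have "\<forall>B\<in>P. sqnorm d B (\<lambda>v. c B * y B v) = 1"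
    using y by (simp add: sqnorm_scale c_def)
  then have "block_form I d P A (\<lambda>B v. c B * y B v) \<le> block_norm I d P A"
    by (rule block_form_le_block_norm[OF assms(1,2)])
  then have "- block_form I d P A y \<le> block_norm I d P A"
    unfolding flip .
  moreover have "block_form I d P A y \<le> block_norm I d P A"
    using block_form_le_block_norm[OF assms(1,2) y] .
  ultimately show ?thesis by linarith
qed

lemma block_form_le_meet:
  assumes "finite I" "partition_on I P1" "partition_on I P2"
  shows "(\<Sum>i\<in>tidx I d. A i * (\<Prod>B\<in>P2. \<Prod>B'\<in>P1. \<phi> B B' (restrict i (B \<inter> B'))))
       \<le> block_norm I d P1 A * sqrt (\<Prod>B\<in>P2. \<Prod>B'\<in>P1. sqnorm d (B \<inter> B') (\<phi> B B'))"
proof -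
  define x where "x B' u = (\<Prod>B\<in>P2. \<phi> B B' (restrict u (B \<inter> B')))" for B' u
  have sub1: "\<forall>B'\<in>P1. B' \<subseteq> I"
    using partition_block_subset[OF assms(2)] by blast
  have "(\<Sum>i\<in>tidx I d. A i * (\<Prod>B\<in>P2. \<Prod>B'\<in>P1. \<phi> B B' (restrict i (B \<inter> B'))))
      = block_form I d P1 A x"
    unfolding block_form_def x_def prod.swap[of _ P2]
    by (simp add: Int_commute Int_left_commute)
  also have "\<dots> \<le> block_norm I d P1 A * sqrt (\<Prod>B'\<in>P1. sqnorm d B' (x B'))"
    by (rule block_form_le_block_norm_scaled[OF assms(1) sub1])
  also have "(\<Prod>B'\<in>P1. sqnorm d B' (x B')) = (\<Prod>B'\<in>P1. \<Prod>B\<in>P2. sqnorm d (B \<inter> B') (\<phi> B B'))"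
  proof (intro prod.cong refl)
    fix B' assume "B' \<in> P1"
    have "\<Union>((\<lambda>B. B \<inter> B') ` P2) = \<Union>P2 \<inter> B'"
      by blast
    also have "\<dots> = B'"
      using sub1 \<open>B' \<in> P1\<close> partition_onD1[OF assms(3)] by auto
    finally have cover: "\<Union>((\<lambda>B. B \<inter> B') ` P2) = B'" .
    show "sqnorm d B' (x B') = (\<Prod>B\<in>P2. sqnorm d (B \<inter> B') (\<phi> B B'))"
      using sqnorm_prod_restrict[OF finite_partition[OF assms(1,3)]
          disjoint_family_on_Int_partition[OF assms(3), of B'], where f = "\<lambda>B. \<phi> B B'"]
      unfolding x_def cover .
  qed
  finally show ?thesis
    by (simp only: prod.swap[of _ P1])
qed

section \<open>Comparing two partitions\<close>

text \<open>Freezing the coordinates of \<open>B - B0\<close> at \<open>t\<close> turns a function \<open>f\<close> on the block \<open>B\<close> into a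
  product over the blocks \<open>B'\<close> of \<open>P1\<close> of functions on \<open>B \<inter> B'\<close>: the slice of \<open>f\<close> on
  \<open>B \<inter> B0\<close>, and point masses at \<open>t\<close> on the other intersections.\<close>
definition slice_factor :: "nat set \<Rightarrow> nat set \<Rightarrow> ((nat \<Rightarrow> nat) \<Rightarrow> real) \<Rightarrow> (nat \<Rightarrow> nat)
    \<Rightarrow> nat set \<Rightarrow> (nat \<Rightarrow> nat) \<Rightarrow> real" where
  "slice_factor B B0 f t B' w =
     (if B' = B0 then f (merge (B \<inter> B0) (B - B0) (w, t)) else of_bool (w = restrict t (B \<inter> B')))"

lemma prod_point_masses:
  assumes "finite I" "partition_on I P" "B0 \<in> P" "B \<subseteq> I"
    and t: "t \<in> tidx (B - B0) d" and i: "i \<in> tidx I d"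
  shows "(\<Prod>B'\<in>P - {B0}. of_bool (restrict i (B \<inter> B') = restrict t (B \<inter> B')))
       = (of_bool (restrict i (B - B0) = t) :: real)"
proof (cases "restrict i (B - B0) = t")
  case True
  have "restrict i (B \<inter> B') = restrict t (B \<inter> B')" if "B' \<in> P - {B0}" for B'
    using Int_other_block_subset[OF assms(2,3), of B' B] that
    unfolding True[symmetric] by (auto simp: restrict_def fun_eq_iff)
  then show ?thesis
    using True by simp
next
  case False
  have "restrict i (B - B0) \<in> tidx (B - B0) d"
    by (rule restrict_in_tidx[OF i]) (use assms(4) in blast)
  then have "\<exists>z\<in>B - B0. restrict i (B - B0) z \<noteq> t z"
    using False t PiE_ext[of "restrict i (B - B0)" "B - B0" "\<lambda>j. {..<d j}" t]
    unfolding tidx_def by blast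
  then obtain z where z: "z \<in> B - B0" "i z \<noteq> t z"
    by auto
  have "z \<in> \<Union>P"
    using z assms(4) partition_onD1[OF assms(2)] by auto
  then obtain B' where B': "B' \<in> P" "z \<in> B'"
    by blast
  then have "B' \<in> P - {B0}" "restrict i (B \<inter> B') \<noteq> restrict t (B \<inter> B')"
    using z by (auto simp: fun_eq_iff)
  then have "(\<Prod>B'\<in>P - {B0}. of_bool (restrict i (B \<inter> B') = restrict t (B \<inter> B'))) = (0::real)"
    using finite_partition[OF assms(1,2)] by (intro prod_zero) auto
  then show ?thesis
    using False by simp
qed

lemma prod_slice_factor:
  assumes "finite I" "partition_on I P" "B0 \<in> P" "B \<subseteq> I"
    and t: "t \<in> tidx (B - B0) d" and i: "i \<in> tidx I d"
  shows "(\<Prod>B'\<in>P. slice_factor B B0 f t B' (restrict i (B \<inter> B')))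
       = (if restrict i (B - B0) = t then f (restrict i B) else 0)"
proof -
  have "(\<Prod>B'\<in>P. slice_factor B B0 f t B' (restrict i (B \<inter> B')))
      = slice_factor B B0 f t B0 (restrict i (B \<inter> B0))
        * (\<Prod>B'\<in>P - {B0}. slice_factor B B0 f t B' (restrict i (B \<inter> B')))"
    by (rule prod.remove[OF finite_partition[OF assms(1,2)] assms(3)])
  also have "\<dots> = f (merge (B \<inter> B0) (B - B0) (i, t))
        * (\<Prod>B'\<in>P - {B0}. of_bool (restrict i (B \<inter> B') = restrict t (B \<inter> B')))"
    by (simp add: slice_factor_def)
  also have "\<dots> = f (merge (B \<inter> B0) (B - B0) (i, t)) * of_bool (restrict i (B - B0) = t)"
    unfolding prod_point_masses[OF assms] ..
  also have "\<dots> = (if restrict i (B - B0) = t then f (restrict i B) else 0)"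
    by (auto simp: Int_Diff_Un)
  finally show ?thesis .
qed

lemma sqnorm_slice_factor:
  assumes "partition_on I P" "B0 \<in> P" "B' \<in> P" "finite B" "t \<in> tidx (B - B0) d"
  shows "sqnorm d (B \<inter> B') (slice_factor B B0 f t B')
       = (if B' = B0 then sqnorm d (B \<inter> B0) (\<lambda>w. f (merge (B \<inter> B0) (B - B0) (w, t))) else 1)"
proof (cases "B' = B0")
  case False
  then have "restrict t (B \<inter> B') \<in> tidx (B \<inter> B') d"
    using restrict_in_tidx[OF assms(5) Int_other_block_subset[OF assms(1-3) False]] by simp
  moreover have "slice_factor B B0 f t B' = (\<lambda>w. of_bool (w = restrict t (B \<inter> B')))"
    using False by (simp add: slice_factor_def fun_eq_iff)
  ultimately show ?thesis
    using False sqnorm_unit_vector[of "B \<inter> B'"] assms(4) by simp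
qed (simp add: slice_factor_def[abs_def])

lemma sum_sqnorm_slices:
  "(\<Sum>t\<in>tidx (B - B0) d. sqnorm d (B \<inter> B0) (\<lambda>w. f (merge (B \<inter> B0) (B - B0) (w, t))))
     = sqnorm d B f"
proof -
  have "sqnorm d B f = sqnorm d ((B \<inter> B0) \<union> (B - B0)) f"
    by (simp add: Int_Diff_Un)
  also have "\<dots> = (\<Sum>w\<in>tidx (B \<inter> B0) d. \<Sum>t\<in>tidx (B - B0) d. (f (merge (B \<inter> B0) (B - B0) (w, t)))\<^sup>2)"
    unfolding sqnorm_def by (rule sum_tidx_Un) blast
  finally show ?thesis
    unfolding sqnorm_def by (simp add: sum.swap[of _ "tidx (B - B0) d"])
qed

lemma prod_eq_sum_slices:
  assumes "finite I" "partition_on I P1" "partition_on I P2" "\<forall>B\<in>P2. F B \<in> P1"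
    and i: "i \<in> tidx I d"
  shows "(\<Prod>B\<in>P2. y B (restrict i B))
       = (\<Sum>T\<in>(\<Pi>\<^sub>E B\<in>P2. tidx (B - F B) d).
            \<Prod>B\<in>P2. \<Prod>B'\<in>P1. slice_factor B (F B) (y B) (T B) B' (restrict i (B \<inter> B')))"
proof -
  have fin: "finite P2" "\<And>B. B \<in> P2 \<Longrightarrow> finite (tidx (B - F B) d)"
    using finite_partition[OF assms(1,3)] partition_block_subset[OF assms(3)] assms(1)
    by (auto intro: finite_tidx finite_subset)
  have "(\<Prod>B\<in>P2. y B (restrict i B))
      = (\<Prod>B\<in>P2. \<Sum>t\<in>tidx (B - F B) d. if restrict i (B - F B) = t then y B (restrict i B) else 0)"
  proof (intro prod.cong refl)
    fix B assume "B \<in> P2"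
    then have "restrict i (B - F B) \<in> tidx (B - F B) d"
      using restrict_in_tidx[OF i] partition_block_subset[OF assms(3)] by blast
    then show "y B (restrict i B)
        = (\<Sum>t\<in>tidx (B - F B) d. if restrict i (B - F B) = t then y B (restrict i B) else 0)"
      using fin(2)[OF \<open>B \<in> P2\<close>] by simp
  qed
  also have "\<dots> = (\<Sum>T\<in>(\<Pi>\<^sub>E B\<in>P2. tidx (B - F B) d).
                    \<Prod>B\<in>P2. if restrict i (B - F B) = T B then y B (restrict i B) else 0)"
    by (rule prod_sum_PiE[OF fin])
  also have "\<dots> = (\<Sum>T\<in>(\<Pi>\<^sub>E B\<in>P2. tidx (B - F B) d).
                    \<Prod>B\<in>P2. \<Prod>B'\<in>P1. slice_factor B (F B) (y B) (T B) B' (restrict i (B \<inter> B')))"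
  proof (intro sum.cong refl prod.cong)
    fix T B assume T: "T \<in> (\<Pi>\<^sub>E B\<in>P2. tidx (B - F B) d)" and B: "B \<in> P2"
    show "(if restrict i (B - F B) = T B then y B (restrict i B) else 0)
        = (\<Prod>B'\<in>P1. slice_factor B (F B) (y B) (T B) B' (restrict i (B \<inter> B')))"
      using prod_slice_factor[OF assms(1,2) _ partition_block_subset[OF assms(3) B] PiE_mem[OF T B] i]
        assms(4) B by simp
  qed
  finally show ?thesis .
qed

lemma block_form_eq_sum_slices:
  assumes "finite I" "partition_on I P1" "partition_on I P2" "\<forall>B\<in>P2. F B \<in> P1"
  shows "block_form I d P2 A y
       = (\<Sum>T\<in>(\<Pi>\<^sub>E B\<in>P2. tidx (B - F B) d). \<Sum>i\<in>tidx I d.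
            A i * (\<Prod>B\<in>P2. \<Prod>B'\<in>P1. slice_factor B (F B) (y B) (T B) B' (restrict i (B \<inter> B'))))"
proof -
  have "block_form I d P2 A y
      = (\<Sum>i\<in>tidx I d. \<Sum>T\<in>(\<Pi>\<^sub>E B\<in>P2. tidx (B - F B) d).
            A i * (\<Prod>B\<in>P2. \<Prod>B'\<in>P1. slice_factor B (F B) (y B) (T B) B' (restrict i (B \<inter> B'))))"
    unfolding block_form_def using prod_eq_sum_slices[OF assms]
    by (intro sum.cong refl) (simp add: sum_distrib_left)
  then show ?thesis
    by (simp only: sum.swap[of _ "tidx I d"])
qed

lemma slice_form_le:
  assumes "finite I" "partition_on I P1" "partition_on I P2" "\<forall>B\<in>P2. F B \<in> P1"
    and T: "T \<in> (\<Pi>\<^sub>E B\<in>P2. tidx (B - F B) d)"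
  shows "(\<Sum>i\<in>tidx I d. A i * (\<Prod>B\<in>P2. \<Prod>B'\<in>P1. slice_factor B (F B) (y B) (T B) B' (restrict i (B \<inter> B'))))
       \<le> block_norm I d P1 A
         * (\<Prod>B\<in>P2. sqrt (sqnorm d (B \<inter> F B) (\<lambda>w. y B (merge (B \<inter> F B) (B - F B) (w, T B)))))"
proof -
  have slice_sqnorm: "(\<Prod>B'\<in>P1. sqnorm d (B \<inter> B') (slice_factor B (F B) (y B) (T B) B'))
      = sqnorm d (B \<inter> F B) (\<lambda>w. y B (merge (B \<inter> F B) (B - F B) (w, T B)))" if B: "B \<in> P2" for B
  proof -
    have "finite B"
      using B partition_block_subset[OF assms(3)] assms(1) finite_subset by blast
    have FB: "F B \<in> P1" using assms(4) B by blast
    have "(\<Prod>B'\<in>P1. sqnorm d (B \<inter> B') (slice_factor B (F B) (y B) (T B) B'))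
        = (\<Prod>B'\<in>P1. if B' = F B
             then sqnorm d (B \<inter> F B) (\<lambda>w. y B (merge (B \<inter> F B) (B - F B) (w, T B))) else 1)"
      by (intro prod.cong refl sqnorm_slice_factor[OF assms(2) FB _ \<open>finite B\<close> PiE_mem[OF T B]])
    then show ?thesis
      using FB finite_partition[OF assms(1,2)] by simp
  qed
  have "(\<Sum>i\<in>tidx I d. A i * (\<Prod>B\<in>P2. \<Prod>B'\<in>P1. slice_factor B (F B) (y B) (T B) B' (restrict i (B \<inter> B'))))
      \<le> block_norm I d P1 A
        * sqrt (\<Prod>B\<in>P2. \<Prod>B'\<in>P1. sqnorm d (B \<inter> B') (slice_factor B (F B) (y B) (T B) B'))"
    by (rule block_form_le_meet[OF assms(1-3)])
  also have "(\<Prod>B\<in>P2. \<Prod>B'\<in>P1. sqnorm d (B \<inter> B') (slice_factor B (F B) (y B) (T B) B'))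
      = (\<Prod>B\<in>P2. sqnorm d (B \<inter> F B) (\<lambda>w. y B (merge (B \<inter> F B) (B - F B) (w, T B))))"
    by (rule prod.cong[OF refl slice_sqnorm])
  finally show ?thesis
    by (simp only: real_sqrt_prod)
qed

lemma sum_prod_sqrt_slice_sqnorm_le:
  assumes "finite P" "\<forall>B\<in>P. finite B" "\<forall>B\<in>P. sqnorm d B (y B) = 1"
  shows "(\<Sum>T\<in>(\<Pi>\<^sub>E B\<in>P. tidx (B - F B) d).
            \<Prod>B\<in>P. sqrt (sqnorm d (B \<inter> F B) (\<lambda>w. y B (merge (B \<inter> F B) (B - F B) (w, T B)))))
       \<le> sqrt (\<Prod>B\<in>P. \<Prod>n\<in>B - F B. real (d n))"
proof -
  define m where "m B t = sqnorm d (B \<inter> F B) (\<lambda>w. y B (merge (B \<inter> F B) (B - F B) (w, t)))" for B t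
  have "(\<Sum>T\<in>(\<Pi>\<^sub>E B\<in>P. tidx (B - F B) d). \<Prod>B\<in>P. sqrt (m B (T B)))
      = (\<Prod>B\<in>P. \<Sum>t\<in>tidx (B - F B) d. sqrt (m B t))"
    by (rule prod_sum_PiE[symmetric]) (use assms(1,2) finite_tidx in auto)
  also have "\<dots> \<le> (\<Prod>B\<in>P. sqrt (card (tidx (B - F B) d) * (\<Sum>t\<in>tidx (B - F B) d. m B t)))"
    by (intro prod_mono conjI sum_nonneg sum_sqrt_le_sqrt_card) (simp_all add: m_def sqnorm_nonneg)
  also have "\<dots> = sqrt (\<Prod>B\<in>P. \<Prod>n\<in>B - F B. real (d n))"
    unfolding m_def real_sqrt_prod[where A = P] using assms(2,3)
    by (intro prod.cong refl) (simp add: sum_sqnorm_slices card_tidx of_nat_prod)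
  finally show ?thesis
    unfolding m_def .
qed

lemma block_norm_le_choice:
  assumes "finite I" "I \<noteq> {}" "\<forall>n\<in>I. d n > 0" "partition_on I P1" "partition_on I P2"
    and F: "\<forall>B\<in>P2. F B \<in> P1"
  shows "block_norm I d P2 A \<le> sqrt (\<Prod>B\<in>P2. \<Prod>n\<in>B - F B. real (d n)) * block_norm I d P1 A"
proof -
  let ?N = "block_norm I d P1 A"
  let ?T = "\<Pi>\<^sub>E B\<in>P2. tidx (B - F B) d"
  let ?c = "sqrt (\<Prod>B\<in>P2. \<Prod>n\<in>B - F B. real (d n))"
  have sub: "\<forall>B\<in>P2. B \<subseteq> I" "\<forall>B\<in>P1. B \<subseteq> I"
    using partition_block_subset assms(4,5) by blast+
  have fin: "finite P2" "\<forall>B\<in>P2. finite B"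
    using finite_partition[OF assms(1,5)] sub(1) assms(1) finite_subset by blast+
  have "P1 \<noteq> {}"
    using assms(2) partition_onD1[OF assms(4)] by auto
  then have N_nonneg: "?N \<ge> 0"
    by (rule block_norm_nonneg[OF assms(1) sub(2) assms(3)])
  have "block_form I d P2 A y \<le> ?c * ?N" if unit: "\<forall>B\<in>P2. sqnorm d B (y B) = 1" for y
  proof -
    let ?s = "\<lambda>B t. sqrt (sqnorm d (B \<inter> F B) (\<lambda>w. y B (merge (B \<inter> F B) (B - F B) (w, t))))"
    have "block_form I d P2 A y
        = (\<Sum>T\<in>?T. \<Sum>i\<in>tidx I d.
             A i * (\<Prod>B\<in>P2. \<Prod>B'\<in>P1. slice_factor B (F B) (y B) (T B) B' (restrict i (B \<inter> B'))))"
      by (rule block_form_eq_sum_slices[OF assms(1,4,5) F])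
    also have "\<dots> \<le> (\<Sum>T\<in>?T. ?N * (\<Prod>B\<in>P2. ?s B (T B)))"
      by (intro sum_mono slice_form_le[OF assms(1,4,5) F])
    also have "\<dots> = ?N * (\<Sum>T\<in>?T. \<Prod>B\<in>P2. ?s B (T B))"
      by (simp add: sum_distrib_left)
    also have "\<dots> \<le> ?N * ?c"
      by (rule mult_left_mono[OF sum_prod_sqrt_slice_sqnorm_le[OF fin unit] N_nonneg])
    finally show ?thesis
      by (simp add: mult.commute)
  qed
  moreover obtain y where "\<forall>B\<in>P2. sqnorm d B (y B) = 1"
    using exists_unit_block_family[OF assms(1) sub(1) assms(3)] by blast
  ultimately show ?thesis
    unfolding block_norm_def[of I d P2] by (intro cSup_least) auto
qed

lemma Max_overlap_pos:
  assumes "finite I" "\<forall>n\<in>I. d n > 0" "partition_on I P" "B \<subseteq> I" "B \<noteq> {}"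
  shows "Max (DA d B ` P) > 0"
proof -
  obtain n where n: "n \<in> B" using assms(5) by blast
  then obtain B' where B': "B' \<in> P" "n \<in> B'"
    using assms(3,4) partition_onD1 by blast
  have "finite B" "\<forall>m\<in>B. d m > 0"
    using assms(1,2,4) finite_subset by blast+
  then have "DA d B B' > 0"
    unfolding DA_def using B' n by (auto intro!: prod_pos)
  also have "DA d B B' \<le> Max (DA d B ` P)"
    using finite_partition[OF assms(1,3)] B'(1) by (intro Max_ge) auto
  finally show ?thesis .
qed

lemma exists_max_overlap_block:
  assumes "finite I" "\<forall>n\<in>I. d n > 0" "partition_on I P" "B \<subseteq> I" "B \<noteq> {}"
  shows "\<exists>B'\<in>P. (\<Prod>n\<in>B \<inter> B'. d n) = Max (DA d B ` P)"
proof -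
  have "Max (DA d B ` P) \<in> DA d B ` P"
    using finite_partition[OF assms(1,3)] assms(3,4,5) partition_onD1
    by (intro Max_in) auto
  then obtain B' where "B' \<in> P" "DA d B B' = Max (DA d B ` P)"
    by auto
  then show ?thesis
    using Max_overlap_pos[OF assms] unfolding DA_def by (auto split: if_splits)
qed

lemma dimA_pos:
  assumes "finite I" "\<forall>n\<in>I. d n > 0" "partition_on I P1" "partition_on I P2"
  shows "dimA d P2 P1 > 0"
  unfolding dimA_def using Max_overlap_pos[OF assms(1-3)] partition_block_subset[OF assms(4)]
    partition_onD3[OF assms(4)] by (intro prod_pos) blast

lemma prod_dims_eq_dimA_mult:
  assumes "finite I" "partition_on I P1" "partition_on I P2"
    and F: "\<forall>B\<in>P2. (\<Prod>n\<in>B \<inter> F B. d n) = Max (DA d B ` P1)"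
  shows "(\<Prod>n\<in>I. d n) = dimA d P2 P1 * (\<Prod>B\<in>P2. \<Prod>n\<in>B - F B. d n)"
proof -
  have fin: "finite B" if "B \<in> P2" for B
    using assms(1) partition_block_subset[OF assms(3) that] finite_subset by blast
  have "(\<Prod>n\<in>I. d n) = (\<Prod>B\<in>P2. \<Prod>n\<in>B. d n)"
    by (rule prod_partition[OF assms(1,3)])
  also have "\<dots> = (\<Prod>B\<in>P2. (\<Prod>n\<in>B \<inter> F B. d n) * (\<Prod>n\<in>B - F B. d n))"
    using fin by (intro prod.cong refl prod.Int_Diff)
  also have "\<dots> = dimA d P2 P1 * (\<Prod>B\<in>P2. \<Prod>n\<in>B - F B. d n)"
    unfolding dimA_def prod.distrib using F by simp
  finally show ?thesis .
qed

lemma block_norm_le_dimA: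
  assumes "finite I" "\<forall>n\<in>I. d n > 0" "partition_on I P1" "partition_on I P2"
  shows "block_norm I d P2 A \<le> sqrt (real (\<Prod>n\<in>I. d n) / real (dimA d P2 P1)) * block_norm I d P1 A"
proof (cases "I = {}")
  case True
  then have "P1 = P2" "P2 = {}"
    using assms(3,4) partition_on_empty by auto
  then show ?thesis
    by (simp add: dimA_def True)
next
  case False
  have "\<forall>B\<in>P2. \<exists>B'\<in>P1. (\<Prod>n\<in>B \<inter> B'. d n) = Max (DA d B ` P1)"
    using exists_max_overlap_block[OF assms(1-3)] partition_block_subset[OF assms(4)]
      partition_onD3[OF assms(4)] by blast
  then obtain F where F: "\<forall>B\<in>P2. F B \<in> P1 \<and> (\<Prod>n\<in>B \<inter> F B. d n) = Max (DA d B ` P1)"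
    by metis
  have "(\<Prod>n\<in>I. d n) = dimA d P2 P1 * (\<Prod>B\<in>P2. \<Prod>n\<in>B - F B. d n)"
    using prod_dims_eq_dimA_mult[OF assms(1,3,4)] F by blast
  then have "real (\<Prod>n\<in>I. d n) / real (dimA d P2 P1) = (\<Prod>B\<in>P2. \<Prod>n\<in>B - F B. real (d n))"
    using dimA_pos[OF assms] by (simp add: of_nat_prod)
  then show ?thesis
    using block_norm_le_choice[OF assms(1) False assms(2-4)] F by simp
qed

section \<open>Unfoldings\<close>

abbreviation block_at :: "nat set set \<Rightarrow> nat \<Rightarrow> nat set" where
  "block_at P j \<equiv> blocks P ! (j - 1)"

lemma bij_betw_block_at:
  assumes "finite P"
  shows "bij_betw (block_at P) {1..length (blocks P)} P"
proof -
  have "set (blocks P) = P \<and> distinct (blocks P)"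
    unfolding blocks_def by (rule someI_ex) (rule finite_distinct_list[OF assms])
  then have "bij_betw ((!) (blocks P)) {..<length (blocks P)} P"
    by (intro bij_betw_nth) auto
  moreover have "bij_betw (\<lambda>j. j - 1) {1..length (blocks P)} {..<length (blocks P)}"
    by (rule bij_betw_byWitness[where f' = Suc]) auto
  ultimately show ?thesis
    using bij_betw_trans by (fastforce simp: comp_def)
qed

lemma bij_betw_enc:
  assumes "finite B"
  shows "bij_betw (enc d B) (tidx B d) {..<(\<Prod>r\<in>B. d r)}"
proof -
  have "\<exists>f. bij_betw f (tidx B d) {..<(\<Prod>r\<in>B. d r)}"
    using assms by (intro finite_same_card_bij) (simp_all add: finite_tidx card_tidx)
  then show ?thesis
    unfolding enc_def by (rule someI_ex)
qed

lemma block_at_in_partition: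
  "finite I \<Longrightarrow> partition_on I P \<Longrightarrow> j \<in> {1..length (blocks P)} \<Longrightarrow> block_at P j \<in> P"
  using bij_betwE[OF bij_betw_block_at[OF finite_partition]] by blast

lemma bij_betw_enc_block_at:
  assumes "finite I" "partition_on I P" "j \<in> {1..length (blocks P)}"
  shows "bij_betw (enc d (block_at P j)) (tidx (block_at P j) d) {..<unfold_dims d P j}"
  unfolding unfold_dims_def
  using bij_betw_enc block_at_in_partition[OF assms] partition_block_subset[OF assms(2)] assms(1)
    finite_subset by metis

definition unfold_index :: "(nat \<Rightarrow> nat) \<Rightarrow> nat set set \<Rightarrow> (nat \<Rightarrow> nat) \<Rightarrow> nat \<Rightarrow> nat" where
  "unfold_index d P i = (\<lambda>j\<in>{1..length (blocks P)}. enc d (block_at P j) (restrict i (block_at P j)))"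

lemma inj_on_unfold_index:
  assumes "finite I" "partition_on I P"
  shows "inj_on (unfold_index d P) (tidx I d)"
proof
  fix i i' assume i: "i \<in> tidx I d" and i': "i' \<in> tidx I d"
    and eq: "unfold_index d P i = unfold_index d P i'"
  have on_block: "restrict i (block_at P j) = restrict i' (block_at P j)"
    if j: "j \<in> {1..length (blocks P)}" for j
  proof -
    have sub: "block_at P j \<subseteq> I"
      using partition_block_subset[OF assms(2) block_at_in_partition[OF assms j]] .
    have "enc d (block_at P j) (restrict i (block_at P j)) = enc d (block_at P j) (restrict i' (block_at P j))"
      using fun_cong[OF eq, of j] j unfolding unfold_index_def by simp
    then show ?thesis
      by (rule inj_onD[OF bij_betw_imp_inj_on[OF bij_betw_enc_block_at[OF assms j]] _
            restrict_in_tidx[OF i sub] restrict_in_tidx[OF i' sub]])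
  qed
  show "i = i'"
  proof (rule tidx_eq_by_blocks[OF assms(2) i i'])
    fix B assume "B \<in> P"
    then have "B \<in> block_at P ` {1..length (blocks P)}"
      using bij_betw_imp_surj_on[OF bij_betw_block_at[OF finite_partition[OF assms]]] by simp
    then show "restrict i B = restrict i' B"
      using on_block by blast
  qed
qed

lemma bij_betw_unfold_index:
  assumes "finite I" "partition_on I P"
  shows "bij_betw (unfold_index d P) (tidx I d) (tidx {1..length (blocks P)} (unfold_dims d P))"
proof -
  let ?l = "length (blocks P)"
  have into: "unfold_index d P ` tidx I d \<subseteq> tidx {1..?l} (unfold_dims d P)"
    using bij_betwE[OF bij_betw_enc_block_at[OF assms]] restrict_in_tidx
      partition_block_subset[OF assms(2) block_at_in_partition[OF assms]]
    unfolding unfold_index_def tidx_def by (fastforce simp: PiE_iff)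
  have "card (tidx {1..?l} (unfold_dims d P)) = (\<Prod>j\<in>{1..?l}. \<Prod>r\<in>block_at P j. d r)"
    by (simp add: card_tidx unfold_dims_def)
  also have "\<dots> = (\<Prod>B\<in>P. \<Prod>r\<in>B. d r)"
    by (rule prod.reindex_bij_betw[OF bij_betw_block_at[OF finite_partition[OF assms]]])
  also have "\<dots> = card (tidx I d)"
    by (simp add: card_tidx assms(1) prod_partition[OF assms])
  finally have "unfold_index d P ` tidx I d = tidx {1..?l} (unfold_dims d P)"
    using into card_image[OF inj_on_unfold_index[OF assms]]
    by (intro card_subset_eq) (simp_all add: finite_tidx)
  then show ?thesis
    using inj_on_unfold_index[OF assms] unfolding bij_betw_def by blast
qed

lemma unfold_unfold_index:
  assumes "partition_on {1..k} P" "i \<in> tidx {1..k} d"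
  shows "unfold k d P A (unfold_index d P i) = A i"
proof -
  have "(THE i'. i' \<in> tidx {1..k} d \<and> (\<forall>j\<in>{1..length (blocks P)}.
          enc d (block_at P j) (restrict i' (block_at P j)) = unfold_index d P i j)) = i"
  proof (rule the_equality)
    fix i' assume "i' \<in> tidx {1..k} d \<and> (\<forall>j\<in>{1..length (blocks P)}.
          enc d (block_at P j) (restrict i' (block_at P j)) = unfold_index d P i j)"
    then have "i' \<in> tidx {1..k} d" "unfold_index d P i' = unfold_index d P i"
      unfolding unfold_index_def by (auto simp: fun_eq_iff)
    then show "i' = i"
      using inj_on_unfold_index[OF finite_atLeastAtMost assms(1)] assms(2) by (auto dest: inj_onD)
  qed (use assms(2) in \<open>simp add: unfold_index_def\<close>)
  then show ?thesis
    unfolding unfold_def by simp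
qed

definition encodes_family :: "(nat \<Rightarrow> nat) \<Rightarrow> nat set set \<Rightarrow> (nat \<Rightarrow> nat \<Rightarrow> real)
    \<Rightarrow> (nat set \<Rightarrow> (nat \<Rightarrow> nat) \<Rightarrow> real) \<Rightarrow> bool" where
  "encodes_family d P x y \<longleftrightarrow> (\<forall>j\<in>{1..length (blocks P)}. \<forall>v\<in>tidx (block_at P j) d.
     x j (enc d (block_at P j) v) = y (block_at P j) v)"

lemma unfolded_form_eq_block_form:
  assumes P: "partition_on {1..k} P" and xy: "encodes_family d P x y"
  shows "(\<Sum>m\<in>tidx {1..length (blocks P)} (unfold_dims d P).
            unfold k d P A m * (\<Prod>j\<in>{1..length (blocks P)}. x j (m j)))
       = block_form {1..k} d P A y"
proof -
  let ?l = "length (blocks P)"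
  have bij: "bij_betw (block_at P) {1..?l} P"
    by (rule bij_betw_block_at[OF finite_partition[OF finite_atLeastAtMost P]])
  have "(\<Sum>m\<in>tidx {1..?l} (unfold_dims d P). unfold k d P A m * (\<Prod>j\<in>{1..?l}. x j (m j)))
      = (\<Sum>i\<in>tidx {1..k} d. unfold k d P A (unfold_index d P i)
           * (\<Prod>j\<in>{1..?l}. x j (unfold_index d P i j)))"
    by (rule sum.reindex_bij_betw[OF bij_betw_unfold_index[OF finite_atLeastAtMost P], symmetric])
  also have "\<dots> = block_form {1..k} d P A y"
    unfolding block_form_def
  proof (intro sum.cong refl arg_cong2[where f = "(*)"])
    fix i assume i: "i \<in> tidx {1..k} d"
    show "unfold k d P A (unfold_index d P i) = A i"
      by (rule unfold_unfold_index[OF P i])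
    have "(\<Prod>j\<in>{1..?l}. x j (unfold_index d P i j))
        = (\<Prod>j\<in>{1..?l}. y (block_at P j) (restrict i (block_at P j)))"
      using xy restrict_in_tidx[OF i partition_block_subset[OF P block_at_in_partition[OF finite_atLeastAtMost P]]]
      by (intro prod.cong refl) (simp add: unfold_index_def encodes_family_def)
    also have "\<dots> = (\<Prod>B\<in>P. y B (restrict i B))"
      by (rule prod.reindex_bij_betw[OF bij])
    finally show "(\<Prod>j\<in>{1..?l}. x j (unfold_index d P i j)) = (\<Prod>B\<in>P. y B (restrict i B))" .
  qed
  finally show ?thesis .
qed

lemma unit_iff_encodes_family:
  assumes P: "partition_on {1..k} P" and xy: "encodes_family d P x y"
  shows "(\<forall>j\<in>{1..length (blocks P)}. sqrt (\<Sum>t<unfold_dims d P j. (x j t)\<^sup>2) = 1)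
       \<longleftrightarrow> (\<forall>B\<in>P. sqnorm d B (y B) = 1)"
proof -
  let ?l = "length (blocks P)"
  have "(\<Sum>t<unfold_dims d P j. (x j t)\<^sup>2) = sqnorm d (block_at P j) (y (block_at P j))"
    if j: "j \<in> {1..?l}" for j
  proof -
    have "sqnorm d (block_at P j) (y (block_at P j))
        = (\<Sum>v\<in>tidx (block_at P j) d. (x j (enc d (block_at P j) v))\<^sup>2)"
      unfolding sqnorm_def using xy j by (simp add: encodes_family_def)
    also have "\<dots> = (\<Sum>t<unfold_dims d P j. (x j t)\<^sup>2)"
      by (rule sum.reindex_bij_betw[OF bij_betw_enc_block_at[OF finite_atLeastAtMost P j]])
    finally show ?thesis by simp
  qed
  moreover have "(\<forall>B\<in>block_at P ` {1..?l}. sqnorm d B (y B) = 1)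
      \<longleftrightarrow> (\<forall>j\<in>{1..?l}. sqnorm d (block_at P j) (y (block_at P j)) = 1)"
    by simp
  ultimately show ?thesis
    unfolding bij_betw_imp_surj_on[OF bij_betw_block_at[OF finite_partition[OF finite_atLeastAtMost P]]] by simp
qed

lemma exists_encoded_family:
  assumes "partition_on {1..k} P"
  shows "\<exists>y. encodes_family d P x y"
proof -
  define y where "y B v = x (the_inv_into {1..length (blocks P)} (block_at P) B) (enc d B v)" for B v
  have "inj_on (block_at P) {1..length (blocks P)}"
    by (rule bij_betw_imp_inj_on[OF bij_betw_block_at[OF finite_partition[OF finite_atLeastAtMost assms]]])
  then have "encodes_family d P x y"
    unfolding encodes_family_def y_def using the_inv_into_f_f[of "block_at P"] by simp
  then show ?thesis by blast
qed

lemma exists_encoding_family: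
  assumes "partition_on {1..k} P"
  shows "\<exists>x. encodes_family d P x y"
proof -
  define x where
    "x j t = y (block_at P j) (the_inv_into (tidx (block_at P j) d) (enc d (block_at P j)) t)" for j t
  have enc_inj: "inj_on (enc d (block_at P j)) (tidx (block_at P j) d)"
    if "j \<in> {1..length (blocks P)}" for j
    by (rule bij_betw_imp_inj_on[OF bij_betw_enc_block_at[OF finite_atLeastAtMost assms that]])
  have "encodes_family d P x y"
    unfolding encodes_family_def x_def using the_inv_into_f_f[OF enc_inj] by simp
  then show ?thesis by blast
qed

lemma unfold_norm_eq_block_norm:
  assumes P: "partition_on {1..k} P"
  shows "unfold_norm k d P A = block_norm {1..k} d P A"
proof -
  let ?l = "length (blocks P)"
  let ?U = "\<lambda>x. \<Sum>m\<in>tidx {1..?l} (unfold_dims d P). unfold k d P A m * (\<Prod>j\<in>{1..?l}. x j (m j))"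
  let ?unit = "\<lambda>x. \<forall>j\<in>{1..?l}. sqrt (\<Sum>t<unfold_dims d P j. (x j t)\<^sup>2) = 1"
  have "{?U x | x. ?unit x} = {block_form {1..k} d P A y | y. \<forall>B\<in>P. sqnorm d B (y B) = 1}"
  proof (intro equalityI subsetI)
    fix z assume "z \<in> {?U x | x. ?unit x}"
    then obtain x where "?unit x" "z = ?U x"
      by blast
    moreover obtain y where "encodes_family d P x y"
      using exists_encoded_family[OF P] by blast
    ultimately show "z \<in> {block_form {1..k} d P A y | y. \<forall>B\<in>P. sqnorm d B (y B) = 1}"
      using unfolded_form_eq_block_form[OF P] unit_iff_encodes_family[OF P] by blast
  next
    fix z assume "z \<in> {block_form {1..k} d P A y | y. \<forall>B\<in>P. sqnorm d B (y B) = 1}"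
    then obtain y where "\<forall>B\<in>P. sqnorm d B (y B) = 1" "z = block_form {1..k} d P A y"
      by blast
    moreover obtain x where "encodes_family d P x y"
      using exists_encoding_family[OF P] by blast
    ultimately have "z = ?U x" "?unit x"
      using unfolded_form_eq_block_form[OF P] unit_iff_encodes_family[OF P] by simp_all
    then show "z \<in> {?U x | x. ?unit x}"
      by blast
  qed
  then show ?thesis
    unfolding unfold_norm_def spec_norm_def block_norm_def by simp
qed

theorem theorem4p8:
  fixes k :: nat and d :: "nat \<Rightarrow> nat" and A :: "(nat \<Rightarrow> nat) \<Rightarrow> real"
    and P1 P2 :: "nat set set"
  assumes "\<forall>n\<in>{1..k}. d n > 0"
    and "partition_on {1..k} P1" and "partition_on {1..k} P2"
  shows "(real (\<Prod>n\<in>{1..k}. d n) / real (dimA d P1 P2)) powr (-1/2) * unfold_norm k d P1 A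
           \<le> unfold_norm k d P2 A
       \<and> unfold_norm k d P2 A
           \<le> (real (\<Prod>n\<in>{1..k}. d n) / real (dimA d P2 P1)) powr (1/2) * unfold_norm k d P1 A"
proof
  note norms = unfold_norm_eq_block_norm[OF assms(2)] unfold_norm_eq_block_norm[OF assms(3)]
  have "0 < (\<Prod>n\<in>{1..k}. d n)" "0 < dimA d P1 P2"
    using assms(1) dimA_pos[OF finite_atLeastAtMost assms(1,3,2)] by (simp_all add: prod_pos)
  then have "real (\<Prod>n\<in>{1..k}. d n) / real (dimA d P1 P2) > 0"
    by (intro divide_pos_pos) (simp_all only: of_nat_0_less_iff)
  then show "(real (\<Prod>n\<in>{1..k}. d n) / real (dimA d P1 P2)) powr (-1/2) * unfold_norm k d P1 A
      \<le> unfold_norm k d P2 A"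
    unfolding norms by (rule powr_neg_half_mult_le[OF _ block_norm_le_dimA[OF finite_atLeastAtMost assms(1,3,2)]])
  have "(real (\<Prod>n\<in>{1..k}. d n) / real (dimA d P2 P1)) powr (1/2)
      = sqrt (real (\<Prod>n\<in>{1..k}. d n) / real (dimA d P2 P1))"
    by (intro powr_half_sqrt divide_nonneg_nonneg of_nat_0_le_iff)
  then show "unfold_norm k d P2 A
      \<le> (real (\<Prod>n\<in>{1..k}. d n) / real (dimA d P2 P1)) powr (1/2) * unfold_norm k d P1 A"
    unfolding norms by (simp only: block_norm_le_dimA[OF finite_atLeastAtMost assms(1,2,3)])
qed

end
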